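(* Let $(G,\rho)$ be a reversible random network and let $\zeta>0$. Suppose that for every $\delta>0$, almost surely, for all sufficiently large $R$, \[ \max\{\mathsf R^G_{\mathrm{eff}}(\rho\leftrightarrow x):x\in B^G(\rho,R)\}\le R^{\zeta+\delta} \quad\text{and}\quad \mathsf R^G_{\mathrm{eff}}(\rho\leftrightarrow\bar B^G(\rho,R))\ge R^{\zeta-\delta}. \] Then $\tilde\zeta=\tilde\zeta_0=\zeta$.
   Context: A random rooted network $(G,\rho,c^G,\xi)$: random locally finite connected graph $G$ (self-loops allowed), root $\rho$, conductances $c^G:E(G)\to[0,\infty)$, marking $\xi$. $c^G_u=\sum_{v:\{u,v\}\in E(G)}c^G(\{u,v\})$; random walk $X_0=\rho$, $\Pr[X_{n+1}=v\mid X_n=u]=c^G(\{u,v\})/c^G_u$. Reversible: a.s. $c^G_\rho>0$ and $(G,X_0,X_1,c^G,\xi)\overset d=(G,X_1,X_0,c^G,\xi)$. $d^G$ graph distance, $B^G(x,R)=\{y:d^G(x,y)\le R\}$, $\bar B^G(x,R)=V(G)\setminus B^G(x,R)$, $\mathsf R^G_{\mathrm{eff}}$ effective resistance in the network $(G,c^G)$. $\tilde\zeta$ is the supremum of the values $\zeta'$ such that for every $\delta>0$, a.s. for all but finitely many $R\in\mathbb N$, $\mathsf R^G_{\mathrm{eff}}(B^G(\rho,R^{1-\delta})\leftrightarrow\bar B^G(\rho,R))\ge R^{\zeta'-\delta}$; $\tilde\zeta_0$ is the infimum of the values $\zeta'$ such that for every $\delta>0$, a.s. for all but finitely many $R\in\mathbb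 N$, $\mathsf R^G_{\mathrm{eff}}(\rho\leftrightarrow\bar B^G(\rho,R))\le R^{\zeta'+\delta}$. *)

theory Defs
  imports "HOL-Probability.Probability"
begin

text \<open>A (labelled) network on vertex labels in nat: vertex set, adjacency
  (simple graph, self-loops allowed), conductances.\<close>
type_synonym net = "(nat \<Rightarrow> bool) \<times> (nat \<Rightarrow> nat \<Rightarrow> bool) \<times> (nat \<Rightarrow> nat \<Rightarrow> real)"

definition nV :: "net \<Rightarrow> nat \<Rightarrow> bool" where "nV N = fst N"
definition nadj :: "net \<Rightarrow> nat \<Rightarrow> nat \<Rightarrow> bool" where "nadj N = fst (snd N)"
definition ncond :: "net \<Rightarrow> nat \<Rightarrow> nat \<Rightarrow> real" where "ncond N = snd (snd N)"

definition wf_net :: "net \<Rightarrow> bool" where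
  "wf_net N \<longleftrightarrow>
     (\<forall>u v. nadj N u v \<longrightarrow> nV N u \<and> nV N v) \<and>
     (\<forall>u v. nadj N u v = nadj N v u) \<and>
     (\<forall>u v. ncond N u v = ncond N v u) \<and>
     (\<forall>u v. 0 \<le> ncond N u v) \<and>
     (\<forall>u v. \<not> nadj N u v \<longrightarrow> ncond N u v = 0) \<and>
     (\<forall>u. finite {v. nadj N u v}) \<and>
     (\<forall>x y. nV N x \<longrightarrow> nV N y \<longrightarrow> (nadj N)\<^sup>*\<^sup>* x y)"

definition gdist :: "net \<Rightarrow> nat \<Rightarrow> nat \<Rightarrow> nat" where
  "gdist N x y = (LEAST n. (nadj N ^^ n) x y)"

definition gball :: "net \<Rightarrow> nat \<Rightarrow> real \<Rightarrow> nat set" where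
  "gball N x r = {y. nV N y \<and> real (gdist N x y) \<le> r}"

definition gcompl :: "net \<Rightarrow> nat \<Rightarrow> real \<Rightarrow> nat set" where
  "gcompl N x r = {y. nV N y} - gball N x r"

definition cdeg :: "net \<Rightarrow> nat \<Rightarrow> real" where
  "cdeg N u = (\<Sum>v\<in>{v. nadj N u v}. ncond N u v)"

definition tprob :: "net \<Rightarrow> nat \<Rightarrow> nat \<Rightarrow> real" where
  "tprob N u v = ncond N u v / cdeg N u"

text \<open>Dirichlet energy (each unordered edge counted once) and effective resistance
  via the Dirichlet principle; inverse 0 = \<infinity>.\<close>
definition energy :: "net \<Rightarrow> (nat \<Rightarrow> real) \<Rightarrow> ennreal" where
  "energy N f = (\<integral>\<^sup>+ p. ennreal (ncond N (fst p) (snd p) * (f (fst p) - f (snd p))\<^sup>2)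
                    \<partial>count_space UNIV) / 2"

definition reff :: "net \<Rightarrow> nat set \<Rightarrow> nat set \<Rightarrow> ennreal" where
  "reff N A B = inverse (INF f \<in> {f :: nat \<Rightarrow> real. (\<forall>a\<in>A. f a = 1) \<and> (\<forall>b\<in>B. f b = 0)}. energy N f)"

definition netM :: "net measure" where
  "netM = (PiM UNIV (\<lambda>_. count_space UNIV)) \<Otimes>\<^sub>M
          ((PiM UNIV (\<lambda>_. PiM UNIV (\<lambda>_. count_space UNIV))) \<Otimes>\<^sub>M
           (PiM UNIV (\<lambda>_. PiM UNIV (\<lambda>_. borel))))"

definition dnetM :: "(net \<times> nat \<times> nat) measure" where
  "dnetM = netM \<Otimes>\<^sub>M (count_space UNIV \<Otimes>\<^sub>M count_space UNIV)"

text \<open>Invariance under network isomorphisms (functionals of isomorphism classes of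
  doubly rooted networks).\<close>
definition iso_invariant :: "(net \<times> nat \<times> nat \<Rightarrow> ennreal) \<Rightarrow> bool" where
  "iso_invariant F \<longleftrightarrow>
     (\<forall>N N' \<phi> x y. wf_net N \<and> wf_net N' \<and> bij_betw \<phi> {u. nV N u} {u. nV N' u} \<and>
        (\<forall>u v. nV N u \<longrightarrow> nV N v \<longrightarrow>
            nadj N' (\<phi> u) (\<phi> v) = nadj N u v \<and> ncond N' (\<phi> u) (\<phi> v) = ncond N u v) \<and>
        nV N x \<and> nV N y \<longrightarrow> F (N, x, y) = F (N', \<phi> x, \<phi> y))"

definition random_rooted_network :: "'a measure \<Rightarrow> ('a \<Rightarrow> net) \<Rightarrow> ('a \<Rightarrow> nat) \<Rightarrow> bool" where
  "random_rooted_network M N \<rho> \<longleftrightarrow>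
     prob_space M \<and> N \<in> measurable M netM \<and> \<rho> \<in> measurable M (count_space UNIV) \<and>
     (\<forall>\<omega>\<in>space M. wf_net (N \<omega>) \<and> nV (N \<omega>) (\<rho> \<omega>))"

text \<open>Reversibility: a.s. c_rho > 0 and (G,X0,X1) =d (G,X1,X0) as doubly rooted
  networks up to isomorphism, tested against all measurable isomorphism-invariant F.\<close>
definition reversible_network :: "'a measure \<Rightarrow> ('a \<Rightarrow> net) \<Rightarrow> ('a \<Rightarrow> nat) \<Rightarrow> bool" where
  "reversible_network M N \<rho> \<longleftrightarrow>
     random_rooted_network M N \<rho> \<and>
     (AE \<omega> in M. 0 < cdeg (N \<omega>) (\<rho> \<omega>)) \<and>
     (\<forall>F. F \<in> borel_measurable dnetM \<longrightarrow> iso_invariant F \<longrightarrow>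
        (\<integral>\<^sup>+ \<omega>. (\<Sum>v\<in>{v. nadj (N \<omega>) (\<rho> \<omega>) v}.
                    ennreal (tprob (N \<omega>) (\<rho> \<omega>) v) * F (N \<omega>, \<rho> \<omega>, v)) \<partial>M)
      = (\<integral>\<^sup>+ \<omega>. (\<Sum>v\<in>{v. nadj (N \<omega>) (\<rho> \<omega>) v}.
                    ennreal (tprob (N \<omega>) (\<rho> \<omega>) v) * F (N \<omega>, v, \<rho> \<omega>)) \<partial>M))"

definition zeta_tilde :: "'a measure \<Rightarrow> ('a \<Rightarrow> net) \<Rightarrow> ('a \<Rightarrow> nat) \<Rightarrow> ereal" where
  "zeta_tilde M N \<rho> = Sup {ereal z | z. \<forall>\<delta>>0. AE \<omega> in M. \<forall>\<^sub>F R in sequentially.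
      ennreal (real R powr (z - \<delta>))
        \<le> reff (N \<omega>) (gball (N \<omega>) (\<rho> \<omega>) (real R powr (1 - \<delta>))) (gcompl (N \<omega>) (\<rho> \<omega>) (real R))}"

definition zeta_tilde0 :: "'a measure \<Rightarrow> ('a \<Rightarrow> net) \<Rightarrow> ('a \<Rightarrow> nat) \<Rightarrow> ereal" where
  "zeta_tilde0 M N \<rho> = Inf {ereal z | z. \<forall>\<delta>>0. AE \<omega> in M. \<forall>\<^sub>F R in sequentially.
      reff (N \<omega>) {\<rho> \<omega>} (gcompl (N \<omega>) (\<rho> \<omega>) (real R)) \<le> ennreal (real R powr (z + \<delta>))}"

end

theory Submission
  imports Defs "HOL-Real_Asymp.Real_Asymp"
begin

(* Upper bound: G is infinite and connected, so some vertex lies at distance exactly R + 1 from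
   \<rho>; it is outside B(\<rho>, R), hence R_eff(\<rho> <-> complement of B(\<rho>, R)) is at most the
   point-to-point bound (R + 1)^(\<zeta>+\<delta>).
   Lower bound: a unit potential h from \<rho> to the complement of B(\<rho>, R) with energy close to
   1 / R_eff, about R^-\<zeta>, is at least 1/2 on the much smaller ball B(\<rho>, R^(1-s)): there the
   point-to-point resistances are at most R^((1-s)(\<zeta>+\<epsilon>)), far below R^\<zeta>, whereas a point x
   with h x < 1/2 would have conductance C_eff(\<rho>, x) at most 4 times the energy of h.  So
   min 1 (2h) is a unit potential from that ball, and R_eff(ball <-> complement) is at least
   R_eff(\<rho> <-> complement) / 8.  Both resistance exponents are therefore squeezed to \<zeta>. *)

lemma ennreal_inverse_antimono:
  assumes "(a::ennreal) \<le> b" shows "inverse b \<le> inverse a"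
proof (cases "a = 0 \<or> b = top")
  case True then show ?thesis by auto
next
  case False
  then have "b \<noteq> top" "a \<noteq> top" using assms by (auto simp: top_unique)
  then obtain x y where "a = ennreal x" "0 \<le> x" "b = ennreal y" "0 \<le> y"
    by (metis ennreal_cases)
  with False assms show ?thesis
    by (simp add: inverse_ennreal ennreal_leI le_imp_inverse_le)
qed

lemma ennreal_inverse_inverse: "inverse (inverse (a::ennreal)) = a"
  using divide_ennreal_def one_divide_one_divide_ennreal by fastforce

lemma energy_le_cmult_energy:
  assumes "0 \<le> L" and "\<And>u v. (g u - g v)\<^sup>2 \<le> L * (f u - f v)\<^sup>2"
  shows "energy N g \<le> ennreal L * energy N f"
proof -
  let ?e = "\<lambda>h p. ennreal (ncond N (fst p) (snd p) * (h (fst p) - h (snd p))\<^sup>2)"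
  have pointwise: "?e g p \<le> ennreal L * ?e f p" for p
  proof (cases "0 \<le> ncond N (fst p) (snd p)")
    case True
    then have "ncond N (fst p) (snd p) * (g (fst p) - g (snd p))\<^sup>2
        \<le> ncond N (fst p) (snd p) * (L * (f (fst p) - f (snd p))\<^sup>2)"
      using assms(2) by (intro mult_left_mono)
    with assms(1) True show ?thesis
      by (simp add: ennreal_mult[symmetric] ennreal_leI mult.left_commute)
  next
    case False
    then show ?thesis by (simp add: ennreal_neg mult_nonpos_nonneg)
  qed
  have "(\<integral>\<^sup>+ p. ?e g p \<partial>count_space UNIV) \<le> (\<integral>\<^sup>+ p. ennreal L * ?e f p \<partial>count_space UNIV)"
    by (intro nn_integral_mono pointwise)
  also have "\<dots> = ennreal L * (\<integral>\<^sup>+ p. ?e f p \<partial>count_space UNIV)"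
    by (rule nn_integral_cmult) auto
  finally have "(\<integral>\<^sup>+ p. ?e g p \<partial>count_space UNIV) / 2
      \<le> ennreal L * (\<integral>\<^sup>+ p. ?e f p \<partial>count_space UNIV) / 2"
    by (rule divide_right_mono_ennreal)
  then show ?thesis unfolding energy_def by (simp add: ennreal_times_divide)
qed

definition unit_potentials :: "nat set \<Rightarrow> nat set \<Rightarrow> (nat \<Rightarrow> real) set" where
  "unit_potentials A B = {f. (\<forall>a\<in>A. f a = 1) \<and> (\<forall>b\<in>B. f b = 0)}"

definition ceff :: "net \<Rightarrow> nat set \<Rightarrow> nat set \<Rightarrow> ennreal" where
  "ceff N A B = (INF f \<in> unit_potentials A B. energy N f)"

lemma reff_eq_inverse_ceff: "reff N A B = inverse (ceff N A B)"
  by (simp add: reff_def ceff_def unit_potentials_def)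

lemma ceff_eq_inverse_reff: "ceff N A B = inverse (reff N A B)"
  by (simp add: reff_eq_inverse_ceff ennreal_inverse_inverse)

lemma ceff_le_energy: "f \<in> unit_potentials A B \<Longrightarrow> ceff N A B \<le> energy N f"
  unfolding ceff_def by (rule INF_lower)

lemma reff_antimono:
  assumes "A \<subseteq> A'" "B \<subseteq> B'" shows "reff N A' B' \<le> reff N A B"
proof -
  have "unit_potentials A' B' \<subseteq> unit_potentials A B"
    using assms by (auto simp: unit_potentials_def)
  then have "ceff N A B \<le> ceff N A' B'" unfolding ceff_def by (rule INF_superset_mono) simp
  then show ?thesis unfolding reff_eq_inverse_ceff by (rule ennreal_inverse_antimono)
qed

lemma ceff_point_le_energy:
  assumes "h r = 1" "h x < 1/2"
  shows "ceff N {r} {x} \<le> 4 * energy N h"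
proof -
  define g where "g v = (h v - h x) / (1 - h x)" for v
  have "g \<in> unit_potentials {r} {x}"
    using assms by (simp add: unit_potentials_def g_def)
  then have "ceff N {r} {x} \<le> energy N g" by (rule ceff_le_energy)
  also have "energy N g \<le> ennreal 4 * energy N h"
  proof (rule energy_le_cmult_energy)
    fix u v
    have "1/2 < 1 - h x" using assms(2) by simp
    then have "(1/2)\<^sup>2 \<le> (1 - h x)\<^sup>2" "0 < (1 - h x)\<^sup>2 * (1/2)\<^sup>2"
      by (intro power_mono, simp_all)
    then have "(h u - h v)\<^sup>2 / (1 - h x)\<^sup>2 \<le> (h u - h v)\<^sup>2 / (1/2)\<^sup>2"
      by (intro divide_left_mono) auto
    moreover have "(g u - g v)\<^sup>2 = (h u - h v)\<^sup>2 / (1 - h x)\<^sup>2"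
      using assms(2) by (simp add: g_def diff_divide_distrib[symmetric] power_divide)
    ultimately show "(g u - g v)\<^sup>2 \<le> 4 * (h u - h v)\<^sup>2" by (simp add: power2_eq_square)
  qed simp
  finally show ?thesis by simp
qed

lemma ceff_le_energy_of_cheap_potential:
  assumes h: "h \<in> unit_potentials {p} Z"
    and cheap: "\<forall>x\<in>A. 4 * energy N h < ceff N {p} {x}"
  shows "ceff N A Z \<le> 4 * energy N h"
proof -
  have half: "1/2 \<le> h x" if "x \<in> A" for x
  proof (rule ccontr)
    assume "\<not> 1/2 \<le> h x"
    then have "ceff N {p} {x} \<le> 4 * energy N h"
      using h by (intro ceff_point_le_energy) (auto simp: unit_potentials_def)
    with cheap that show False by (meson leD)
  qed
  define f where "f v = min 1 (max 0 (2 * h v))" for v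
  have "f x = 1" if "x \<in> A" for x using half[OF that] by (simp add: f_def)
  then have "f \<in> unit_potentials A Z"
    using h by (auto simp: unit_potentials_def f_def)
  then have "ceff N A Z \<le> energy N f" by (rule ceff_le_energy)
  also have "energy N f \<le> ennreal 4 * energy N h"
  proof (rule energy_le_cmult_energy)
    fix u v
    have "\<bar>f u - f v\<bar> \<le> \<bar>2 * h u - 2 * h v\<bar>" by (auto simp: f_def min_def max_def abs_if)
    then have "\<bar>f u - f v\<bar>\<^sup>2 \<le> \<bar>2 * h u - 2 * h v\<bar>\<^sup>2" by (rule power_mono) simp
    then show "(f u - f v)\<^sup>2 \<le> 4 * (h u - h v)\<^sup>2" by (simp add: power2_eq_square algebra_simps)
  qed simp
  finally show ?thesis by simp
qed

lemma reff_ge_of_point_reff_le: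
  assumes "0 < a" "0 < b" "8 * b \<le> a"
    and near: "\<forall>x\<in>A. reff N {p} {x} \<le> ennreal b"
    and far: "ennreal a \<le> reff N {p} Z"
  shows "ennreal (a/8) \<le> reff N A Z"
proof -
  have "ceff N {p} Z \<le> inverse (ennreal a)"
    unfolding ceff_eq_inverse_reff using far by (rule ennreal_inverse_antimono)
  also have "\<dots> < ennreal (2/a)"
    using \<open>0 < a\<close> by (simp add: inverse_ennreal inverse_eq_divide ennreal_lessI divide_strict_right_mono)
  finally obtain h where h: "h \<in> unit_potentials {p} Z" "energy N h < ennreal (2/a)"
    unfolding ceff_def by (auto simp: INF_less_iff)
  have cheap: "4 * energy N h < ennreal (8/a)"
    using ennreal_mult_strict_left_mono[OF h(2), of 4] ennreal_mult'[of 4 "2/a"] by simp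
  have "ennreal (8/a) \<le> ceff N {p} {x}" if "x \<in> A" for x
  proof -
    have "ennreal (8/a) \<le> ennreal (1/b)"
      using assms(1-3) by (intro ennreal_leI) (simp add: field_simps)
    also have "\<dots> = inverse (ennreal b)" using \<open>0 < b\<close> by (simp add: inverse_ennreal inverse_eq_divide)
    also have "\<dots> \<le> ceff N {p} {x}"
      unfolding ceff_eq_inverse_reff using near that by (intro ennreal_inverse_antimono) auto
    finally show ?thesis .
  qed
  then have "ceff N A Z \<le> 4 * energy N h"
    using cheap by (intro ceff_le_energy_of_cheap_potential[OF h(1)] ballI) (meson less_le_trans)
  then have "ceff N A Z \<le> ennreal (8/a)" using cheap by simp
  then have "inverse (ennreal (8/a)) \<le> reff N A Z"
    unfolding reff_eq_inverse_ceff by (intro ennreal_inverse_antimono) simp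
  then show ?thesis using \<open>0 < a\<close> by (simp add: inverse_ennreal)
qed

lemma gdist_le: "(nadj N ^^ n) x y \<Longrightarrow> gdist N x y \<le> n"
  unfolding gdist_def by (rule Least_le)

lemma relpowp_gdist:
  assumes "wf_net N" "nV N x" "nV N y" shows "(nadj N ^^ gdist N x y) x y"
proof -
  have "(nadj N)\<^sup>*\<^sup>* x y" using assms unfolding wf_net_def by blast
  then obtain n where "(nadj N ^^ n) x y" by (auto simp: rtranclp_power)
  then show ?thesis unfolding gdist_def by (rule LeastI)
qed

lemma gdist_self: "gdist N x x = 0"
  unfolding gdist_def by (rule Least_eq_0) simp

lemma finite_reachable_within:
  assumes "wf_net N" shows "finite {y. \<exists>k\<le>n. (nadj N ^^ k) x y}"
proof (induction n)
  case 0 then show ?case by simp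
next
  case (Suc n)
  let ?S = "{y. \<exists>k\<le>n. (nadj N ^^ k) x y}"
  have "{y. \<exists>k\<le>Suc n. (nadj N ^^ k) x y} \<subseteq> ?S \<union> (\<Union>z\<in>?S. {v. nadj N z v})"
    by (auto simp: le_Suc_eq) (metis order.refl relpowp_Suc_E)
  moreover have "finite (\<Union>z\<in>?S. {v. nadj N z v})"
    using Suc.IH assms by (intro finite_UN_I) (auto simp: wf_net_def)
  ultimately show ?case using Suc.IH by (meson finite_UnI finite_subset)
qed

lemma finite_gball:
  assumes "wf_net N" "nV N x" shows "finite (gball N x (real n))"
proof -
  have "gball N x (real n) \<subseteq> {y. \<exists>k\<le>n. (nadj N ^^ k) x y}"
    using relpowp_gdist[OF assms] by (auto simp: gball_def)
  then show ?thesis using finite_reachable_within[OF assms(1)] by (rule finite_subset)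
qed

lemma exists_vertex_at_gdist:
  assumes wf: "wf_net N" and x: "nV N x" and "infinite {v. nV N v}"
  shows "\<exists>z. nV N z \<and> gdist N x z = Suc R"
proof -
  obtain y where y: "nV N y" "y \<notin> gball N x (real R)"
    using finite_gball[OF wf x, of R] assms(3) by (metis mem_Collect_eq subsetI rev_finite_subset)
  define m where "m = gdist N x y - Suc R"
  have "gdist N x y = Suc R + m" using y unfolding gball_def m_def by auto
  then have "(nadj N ^^ Suc R OO nadj N ^^ m) x y"
    using relpowp_gdist[OF wf x y(1)] by (simp only: relpowp_add)
  then obtain z where z: "(nadj N ^^ Suc R) x z" "(nadj N ^^ m) z y" by blast
  then have "nV N z" using wf unfolding wf_net_def by (metis relpowp_Suc_E)
  have "\<not> gdist N x z < Suc R"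
  proof
    assume "gdist N x z < Suc R"
    moreover have "(nadj N ^^ (gdist N x z + m)) x y"
      using relpowp_gdist[OF wf x \<open>nV N z\<close>] z(2) by (auto simp: relpowp_add)
    ultimately show False using \<open>gdist N x y = Suc R + m\<close> gdist_le by fastforce
  qed
  with gdist_le[OF z(1)] \<open>nV N z\<close> show ?thesis by auto
qed

lemma gball_mono: "r \<le> r' \<Longrightarrow> gball N p r \<subseteq> gball N p r'"
  by (auto simp: gball_def)

lemma gball_nat_floor: "0 \<le> t \<Longrightarrow> gball N p (real (nat \<lfloor>t\<rfloor>)) = gball N p t"
  by (auto simp: gball_def) (meson of_int_floor_le order_trans, metis le_floor_iff of_int_le_iff of_int_of_nat_eq)

lemma reff_gball_le_reff_center:
  assumes "nV N p" "0 \<le> r" shows "reff N (gball N p r) B \<le> reff N {p} B"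
  using assms by (intro reff_antimono) (auto simp: gball_def gdist_self)

definition resistance_exponent_bounds :: "net \<Rightarrow> nat \<Rightarrow> real \<Rightarrow> real \<Rightarrow> nat \<Rightarrow> bool" where
  "resistance_exponent_bounds N p \<zeta> \<delta> R \<longleftrightarrow>
     (SUP x \<in> gball N p (real R). reff N {p} {x}) \<le> ennreal (real R powr (\<zeta> + \<delta>)) \<and>
     ennreal (real R powr (\<zeta> - \<delta>)) \<le> reff N {p} (gcompl N p (real R))"

lemma eventually_reff_gcompl_le:
  assumes wf: "wf_net N" and p: "nV N p" and inf: "infinite {v. nV N v}" and "0 < \<delta>"
    and bounds: "\<forall>\<^sub>F R in sequentially. resistance_exponent_bounds N p \<zeta> (\<delta>/2) R"
  shows "\<forall>\<^sub>F R in sequentially. reff N {p} (gcompl N p (real R)) \<le> ennreal (real R powr (\<zeta> + \<delta>))"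
proof -
  have "\<forall>\<^sub>F R in sequentially. resistance_exponent_bounds N p \<zeta> (\<delta>/2) (Suc R)"
    using bounds by (simp add: eventually_sequentially_Suc)
  moreover have "\<forall>\<^sub>F R in sequentially. real (Suc R) powr (\<zeta> + \<delta>/2) \<le> real R powr (\<zeta> + \<delta>)"
    using \<open>0 < \<delta>\<close> by real_asymp
  ultimately show ?thesis
  proof eventually_elim
    case (elim R)
    obtain y where y: "nV N y" "gdist N p y = Suc R" using exists_vertex_at_gdist[OF wf p inf] by blast
    then have "reff N {p} (gcompl N p (real R)) \<le> reff N {p} {y}"
      by (intro reff_antimono) (auto simp: gcompl_def gball_def)
    also have "\<dots> \<le> (SUP x \<in> gball N p (real (Suc R)). reff N {p} {x})"
      using y by (intro SUP_upper) (simp add: gball_def)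
    also have "\<dots> \<le> ennreal (real (Suc R) powr (\<zeta> + \<delta>/2))"
      using elim(1) by (simp add: resistance_exponent_bounds_def)
    also have "\<dots> \<le> ennreal (real R powr (\<zeta> + \<delta>))"
      using elim(2) by (rule ennreal_leI)
    finally show ?case .
  qed
qed

(* The margin makes the point-to-point bound r^(\<zeta>+\<epsilon>) at the inner radius r = R^(1-s)
   negligible against the bound R^(\<zeta>-\<epsilon>) on the resistance from p to the complement of B(p, R). *)
lemma eventually_reff_gball_gcompl_ge:
  assumes "0 < \<zeta>" "s < 1" "s \<le> \<delta>" "0 < \<epsilon>" "\<epsilon> < \<delta>"
    and margin: "(1 - s) * (\<zeta> + \<epsilon>) < \<zeta> - \<epsilon>"
    and bounds: "\<forall>\<^sub>F R in sequentially. resistance_exponent_bounds N p \<zeta> \<epsilon> R"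
  shows "\<forall>\<^sub>F R in sequentially.
           ennreal (real R powr (\<zeta> - \<delta>)) \<le> reff N (gball N p (real R powr (1 - \<delta>))) (gcompl N p (real R))"
proof -
  define r where "r R = nat \<lfloor>real R powr (1 - s)\<rfloor>" for R
  have "filterlim r at_top sequentially"
    unfolding r_def using \<open>s < 1\<close> by real_asymp
  moreover have "\<forall>\<^sub>F n in sequentially. 1 \<le> n \<and> resistance_exponent_bounds N p \<zeta> \<epsilon> n"
    using eventually_ge_at_top bounds by (rule eventually_conj)
  ultimately have inner: "\<forall>\<^sub>F R in sequentially. 1 \<le> r R \<and> resistance_exponent_bounds N p \<zeta> \<epsilon> (r R)"
    by (rule eventually_compose_filterlim[rotated])
  have "\<forall>\<^sub>F R in sequentially. 8 * real R powr ((1 - s) * (\<zeta> + \<epsilon>)) \<le> real R powr (\<zeta> - \<epsilon>)"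
    using margin by real_asymp
  moreover have "\<forall>\<^sub>F R in sequentially. 8 * real R powr (\<zeta> - \<delta>) \<le> real R powr (\<zeta> - \<epsilon>)"
    using \<open>\<epsilon> < \<delta>\<close> by real_asymp
  ultimately show ?thesis using bounds inner eventually_ge_at_top[of 1]
  proof eventually_elim
    case (elim R)
    define a where "a = real R powr (\<zeta> - \<epsilon>)"
    define b where "b = real (r R) powr (\<zeta> + \<epsilon>)"
    have R: "1 \<le> real R" using elim(5) by simp
    have "real (r R) \<le> real R powr (1 - s)" unfolding r_def by (simp add: of_nat_floor)
    then have "b \<le> (real R powr (1 - s)) powr (\<zeta> + \<epsilon>)"
      unfolding b_def using assms(1,4) by (intro powr_mono2) auto
    then have "8 * b \<le> a"
      using elim(1) by (simp add: a_def powr_powr)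
    have A: "gball N p (real R powr (1 - \<delta>)) \<subseteq> gball N p (real (r R))"
      unfolding r_def gball_nat_floor[OF powr_ge_zero] using R \<open>s \<le> \<delta>\<close>
      by (intro gball_mono powr_mono) auto
    have "\<forall>x\<in>gball N p (real R powr (1 - \<delta>)). reff N {p} {x} \<le> ennreal b"
      using elim(4) A unfolding resistance_exponent_bounds_def b_def
      by (meson SUP_upper order_trans subsetD)
    moreover have "ennreal a \<le> reff N {p} (gcompl N p (real R))"
      using elim(3) by (simp add: resistance_exponent_bounds_def a_def)
    moreover have "0 < b" using elim(4) by (simp add: b_def)
    ultimately have "ennreal (a/8) \<le> reff N (gball N p (real R powr (1 - \<delta>))) (gcompl N p (real R))"
      using \<open>8 * b \<le> a\<close> R by (intro reff_ge_of_point_reff_le) (auto simp: a_def)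
    moreover have "real R powr (\<zeta> - \<delta>) \<le> a/8" using elim(2) by (simp add: a_def)
    ultimately show ?case by (meson ennreal_leI order_trans)
  qed
qed

lemma exponent_margins:
  fixes \<zeta> \<delta> :: real
  assumes "0 < \<zeta>" "0 < \<delta>"
  obtains s \<epsilon> where "s < 1" "s \<le> \<delta>" "0 < \<epsilon>" "\<epsilon> < \<delta>"
    "(1 - s) * (\<zeta> + \<epsilon>) < \<zeta> - \<epsilon>"
proof -
  define s where "s = min \<delta> (1/2)"
  define m where "m = min \<zeta> 1"
  define \<epsilon> where "\<epsilon> = s * m / 4"
  have s: "0 < s" "s < 1" "s \<le> \<delta>" using assms by (auto simp: s_def)
  have m: "0 < m" "m \<le> 1" "m \<le> \<zeta>" using assms by (auto simp: m_def)
  have "s * m \<le> s" "s * m \<le> s * \<zeta>" "0 < s * m" "0 < s * \<epsilon>"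
    using s m by (simp_all add: \<epsilon>_def mult_left_le mult_left_mono)
  moreover have "(1 - s) * (\<zeta> + \<epsilon>) = \<zeta> + \<epsilon> - s * \<zeta> - s * \<epsilon>" by (simp add: algebra_simps)
  ultimately show thesis
    using s \<epsilon>_def by (intro that[of s \<epsilon>]) linarith+
qed

lemma AE_eventually_reff_gcompl_le:
  assumes wf: "AE \<omega> in M. wf_net (N \<omega>) \<and> nV (N \<omega>) (\<rho> \<omega>)"
    and inf: "AE \<omega> in M. infinite {v. nV (N \<omega>) v}"
    and bounds: "\<forall>\<epsilon>>0.
      AE \<omega> in M. \<forall>\<^sub>F R in sequentially. resistance_exponent_bounds (N \<omega>) (\<rho> \<omega>) \<zeta> \<epsilon> R"
    and "0 < \<delta>"
  shows "AE \<omega> in M. \<forall>\<^sub>F R in sequentially.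
           reff (N \<omega>) {\<rho> \<omega>} (gcompl (N \<omega>) (\<rho> \<omega>) (real R)) \<le> ennreal (real R powr (\<zeta> + \<delta>))"
  using bounds[rule_format, OF half_gt_zero[OF \<open>0 < \<delta>\<close>]] wf inf
  by eventually_elim (simp add: eventually_reff_gcompl_le \<open>0 < \<delta>\<close>)

lemma AE_eventually_reff_gball_gcompl_le:
  assumes wf: "AE \<omega> in M. wf_net (N \<omega>) \<and> nV (N \<omega>) (\<rho> \<omega>)"
    and inf: "AE \<omega> in M. infinite {v. nV (N \<omega>) v}"
    and bounds: "\<forall>\<epsilon>>0.
      AE \<omega> in M. \<forall>\<^sub>F R in sequentially. resistance_exponent_bounds (N \<omega>) (\<rho> \<omega>) \<zeta> \<epsilon> R"
    and "0 < \<delta>"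
  shows "AE \<omega> in M. \<forall>\<^sub>F R in sequentially. reff (N \<omega>) (gball (N \<omega>) (\<rho> \<omega>) (real R powr (1 - \<delta>)))
           (gcompl (N \<omega>) (\<rho> \<omega>) (real R)) \<le> ennreal (real R powr (\<zeta> + \<delta>))"
  using AE_eventually_reff_gcompl_le[OF wf inf bounds \<open>0 < \<delta>\<close>] wf
  by eventually_elim (auto elim!: eventually_mono intro: order_trans[OF reff_gball_le_reff_center])

lemma AE_eventually_reff_gball_gcompl_ge:
  assumes "0 < \<zeta>"
    and bounds: "\<forall>\<epsilon>>0.
      AE \<omega> in M. \<forall>\<^sub>F R in sequentially. resistance_exponent_bounds (N \<omega>) (\<rho> \<omega>) \<zeta> \<epsilon> R"
    and "0 < \<delta>"
  shows "AE \<omega> in M. \<forall>\<^sub>F R in sequentially. ennreal (real R powr (\<zeta> - \<delta>))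
           \<le> reff (N \<omega>) (gball (N \<omega>) (\<rho> \<omega>) (real R powr (1 - \<delta>))) (gcompl (N \<omega>) (\<rho> \<omega>) (real R))"
proof -
  obtain s \<epsilon> where margins: "s < 1" "s \<le> \<delta>" "0 < \<epsilon>" "\<epsilon> < \<delta>" "(1 - s) * (\<zeta> + \<epsilon>) < \<zeta> - \<epsilon>"
    using exponent_margins[OF assms(1,3)] by blast
  show ?thesis
    using bounds[rule_format, OF \<open>0 < \<epsilon>\<close>]
    by eventually_elim (rule eventually_reff_gball_gcompl_ge[OF assms(1) margins])
qed

lemma (in prob_space) exponent_le_of_growth_bounds:
  assumes "AE \<omega> in M. \<forall>\<^sub>F R in sequentially. ennreal (real R powr a) \<le> X \<omega> R"
    and "AE \<omega> in M. \<forall>\<^sub>F R in sequentially. X \<omega> R \<le> ennreal (real R powr b)"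
  shows "a \<le> b"
proof -
  have "AE \<omega> in M. \<forall>\<^sub>F R in sequentially. real R powr a \<le> real R powr b"
    using assms
  proof eventually_elim
    case (elim \<omega>)
    from elim(1,2) show ?case
      by eventually_elim (metis ennreal_le_iff order_trans powr_ge_zero)
  qed
  then obtain \<omega> where "\<forall>\<^sub>F R in sequentially. real R powr a \<le> real R powr b"
    by (metis (mono_tags) AE_False eventually_mono)
  then obtain R0 where R0: "\<forall>R\<ge>R0. real R powr a \<le> real R powr b"
    by (auto simp: eventually_sequentially)
  show ?thesis
    using R0[rule_format, of "R0 + 2"] powr_le_cancel_iff[of "real (R0 + 2)" a b] by simp
qed

lemma (in prob_space) Inf_upper_growth_exponents_eq:
  assumes lower: "\<And>\<delta>. 0 < \<delta> \<Longrightarrow>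
      AE \<omega> in M. \<forall>\<^sub>F R in sequentially. ennreal (real R powr (\<zeta> - \<delta>)) \<le> X \<delta> \<omega> R"
    and upper: "\<And>\<delta>. 0 < \<delta> \<Longrightarrow>
      AE \<omega> in M. \<forall>\<^sub>F R in sequentially. X \<delta> \<omega> R \<le> ennreal (real R powr (\<zeta> + \<delta>))"
  shows "Inf {ereal z | z. \<forall>\<delta>>0. AE \<omega> in M. \<forall>\<^sub>F R in sequentially.
            X \<delta> \<omega> R \<le> ennreal (real R powr (z + \<delta>))} = ereal \<zeta>" (is "Inf ?E = _")
proof (rule cInf_eq_minimum)
  show "ereal \<zeta> \<in> ?E" using upper by blast
  show "ereal \<zeta> \<le> x" if "x \<in> ?E" for x
  proof -
    obtain z where "x = ereal z"
      and z: "\<And>\<delta>. 0 < \<delta> \<Longrightarrow> AE \<omega> in M. \<forall>\<^sub>F R in sequentially. X \<delta> \<omega> R \<le> ennreal (real R powr (z + \<delta>))"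
      using \<open>x \<in> ?E\<close> by blast
    have close: "\<zeta> - \<delta> \<le> z + \<delta>" if "0 < \<delta>" for \<delta>
      using lower[OF that] z[OF that] by (rule exponent_le_of_growth_bounds)
    have "\<zeta> \<le> z"
    proof (rule field_le_epsilon)
      fix e :: real
      assume "0 < e"
      then show "\<zeta> \<le> z + e" using close[of "e/2"] by simp
    qed
    with \<open>x = ereal z\<close> show ?thesis by simp
  qed
qed

lemma (in prob_space) Sup_lower_growth_exponents_eq:
  assumes lower: "\<And>\<delta>. 0 < \<delta> \<Longrightarrow>
      AE \<omega> in M. \<forall>\<^sub>F R in sequentially. ennreal (real R powr (\<zeta> - \<delta>)) \<le> X \<delta> \<omega> R"
    and upper: "\<And>\<delta>. 0 < \<delta> \<Longrightarrow>
      AE \<omega> in M. \<forall>\<^sub>F R in sequentially. X \<delta> \<omega> R \<le> ennreal (real R powr (\<zeta> + \<delta>))"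
  shows "Sup {ereal z | z. \<forall>\<delta>>0. AE \<omega> in M. \<forall>\<^sub>F R in sequentially.
            ennreal (real R powr (z - \<delta>)) \<le> X \<delta> \<omega> R} = ereal \<zeta>" (is "Sup ?E = _")
proof (rule cSup_eq_maximum)
  show "ereal \<zeta> \<in> ?E" using lower by blast
  show "x \<le> ereal \<zeta>" if "x \<in> ?E" for x
  proof -
    obtain z where "x = ereal z"
      and z: "\<And>\<delta>. 0 < \<delta> \<Longrightarrow> AE \<omega> in M. \<forall>\<^sub>F R in sequentially. ennreal (real R powr (z - \<delta>)) \<le> X \<delta> \<omega> R"
      using \<open>x \<in> ?E\<close> by blast
    have close: "z - \<delta> \<le> \<zeta> + \<delta>" if "0 < \<delta>" for \<delta>
      using z[OF that] upper[OF that] by (rule exponent_le_of_growth_bounds)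
    have "z \<le> \<zeta>"
    proof (rule field_le_epsilon)
      fix e :: real
      assume "0 < e"
      then show "z \<le> \<zeta> + e" using close[of "e/2"] by simp
    qed
    with \<open>x = ereal z\<close> show ?thesis by simp
  qed
qed

theorem theorem4p7:
  fixes M :: "'a measure" and N :: "'a \<Rightarrow> net" and \<rho> :: "'a \<Rightarrow> nat" and \<zeta> :: real
  assumes "reversible_network M N \<rho>"
    and "AE \<omega> in M. infinite {v. nV (N \<omega>) v}"
    and "\<zeta> > 0"
    and "\<forall>\<delta>>0. AE \<omega> in M. \<forall>\<^sub>F R in sequentially.
           (SUP x \<in> gball (N \<omega>) (\<rho> \<omega>) (real R). reff (N \<omega>) {\<rho> \<omega>} {x})
              \<le> ennreal (real R powr (\<zeta> + \<delta>))
         \<and> ennreal (real R powr (\<zeta> - \<delta>))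
              \<le> reff (N \<omega>) {\<rho> \<omega>} (gcompl (N \<omega>) (\<rho> \<omega>) (real R))"
  shows "zeta_tilde M N \<rho> = ereal \<zeta> \<and> zeta_tilde0 M N \<rho> = ereal \<zeta>"
proof -
  have ps: "prob_space M" and wf: "AE \<omega> in M. wf_net (N \<omega>) \<and> nV (N \<omega>) (\<rho> \<omega>)"
    using assms(1) by (auto simp: reversible_network_def random_rooted_network_def)
  have bounds: "\<forall>\<delta>>0. AE \<omega> in M. \<forall>\<^sub>F R in sequentially. resistance_exponent_bounds (N \<omega>) (\<rho> \<omega>) \<zeta> \<delta> R"
    using assms(4) by (simp add: resistance_exponent_bounds_def)
  have lower0: "AE \<omega> in M. \<forall>\<^sub>F R in sequentially.
      ennreal (real R powr (\<zeta> - \<delta>)) \<le> reff (N \<omega>) {\<rho> \<omega>} (gcompl (N \<omega>) (\<rho> \<omega>) (real R))"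
    if "0 < \<delta>" for \<delta>
    using bounds that by (auto elim!: AE_mp eventually_mono simp: resistance_exponent_bounds_def)
  show ?thesis
    unfolding zeta_tilde_def zeta_tilde0_def
    by (intro conjI prob_space.Sup_lower_growth_exponents_eq[OF ps]
        prob_space.Inf_upper_growth_exponents_eq[OF ps] lower0
        AE_eventually_reff_gball_gcompl_ge[OF assms(3) bounds]
        AE_eventually_reff_gball_gcompl_le[OF wf assms(2) bounds]
        AE_eventually_reff_gcompl_le[OF wf assms(2) bounds])
qed

end
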